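(* Let $v,u$ be integrable functions on $[0,\infty)$ and let $m,M,n,N$ be real constants such that $$m\le v(x)\le M\quad\text{and}\quad n\le u(x)\le N\quad\text{for all }x\in[0,\infty).$$ Then for all $x>0$, $\alpha>0$, $\delta>0$, $\rho>0$ and $\beta,\lambda,\eta,k\in\mathbb{R}$, writing $A f=\,{}^{\rho}\mathcal{J}^{\alpha,\beta}_{\eta,k}f(x)$, $D f=\,{}^{\rho}\mathcal{J}^{\delta,\lambda}_{\eta,k}f(x)$, $\Lambda_1=\Lambda^{\rho,\beta}_{x,k}(\alpha,\eta)$, $\Lambda_2=\Lambda^{\rho,\lambda}_{x,k}(\delta,\eta)$, the following hold: (A) $M\Lambda_1\,Du+n\Lambda_2\,Av\ \ge\ nM\Lambda_2\Lambda_1+Du\,Av$; (B) $m\Lambda_2\,Au+N\Lambda_1\,Dv\ \ge\ mN\Lambda_2\Lambda_1+Dv\,Au$; (C) $MN\Lambda_1\Lambda_2+Av\,Du\ \ge\ M\Lambda_1\,Du+N\Lambda_2\,Av$; (D) $mn\Lambda_1\Lambda_2+Av\,Du\ \ge\ m\Lambda_1\,Du+n\Lambda_2\,Av$.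
   Context: For a function $f$ on $[0,\infty)$, $x>0$, $\alpha>0$, $\rho>0$ and $\beta,\eta,k\in\mathbb{R}$, the generalized Katugampola fractional integral is $${}^{\rho}\mathcal{J}^{\alpha,\beta}_{\eta,k}f(x)=\frac{\rho^{1-\beta}x^{k}}{\Gamma(\alpha)}\int_0^x\frac{\tau^{\rho(\eta+1)-1}}{(x^\rho-\tau^\rho)^{1-\alpha}}f(\tau)\,d\tau,$$ defined whenever the integral exists; all such integrals appearing are assumed to exist. Also $$\Lambda^{\rho,\beta}_{x,k}(\alpha,\eta)=\frac{\Gamma(\eta+1)}{\Gamma(\eta+\alpha+1)}\rho^{-\beta}x^{k+\rho(\eta+\alpha)}.$$ *)

theory Defs
  imports "HOL-Analysis.Analysis"
begin

definition katu_integrand ::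
  "real \<Rightarrow> real \<Rightarrow> real \<Rightarrow> (real \<Rightarrow> real) \<Rightarrow> real \<Rightarrow> real \<Rightarrow> real" where
  "katu_integrand \<rho> \<alpha> \<eta> f x \<tau> =
     \<tau> powr (\<rho> * (\<eta> + 1) - 1) / (x powr \<rho> - \<tau> powr \<rho>) powr (1 - \<alpha>) * f \<tau>"

definition katu_exists ::
  "real \<Rightarrow> real \<Rightarrow> real \<Rightarrow> (real \<Rightarrow> real) \<Rightarrow> real \<Rightarrow> bool" where
  "katu_exists \<rho> \<alpha> \<eta> f x \<longleftrightarrow> katu_integrand \<rho> \<alpha> \<eta> f x integrable_on {0..x}"

definition katu ::
  "real \<Rightarrow> real \<Rightarrow> real \<Rightarrow> real \<Rightarrow> real \<Rightarrow> (real \<Rightarrow> real) \<Rightarrow> real \<Rightarrow> real" where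
  "katu \<rho> \<alpha> \<beta> \<eta> k f x =
     \<rho> powr (1 - \<beta>) * x powr k / Gamma \<alpha> * integral {0..x} (katu_integrand \<rho> \<alpha> \<eta> f x)"

definition katu_Lambda ::
  "real \<Rightarrow> real \<Rightarrow> real \<Rightarrow> real \<Rightarrow> real \<Rightarrow> real \<Rightarrow> real" where
  "katu_Lambda \<rho> \<beta> x k \<alpha> \<eta> =
     Gamma (\<eta> + 1) / Gamma (\<eta> + \<alpha> + 1) * \<rho> powr (- \<beta>) * x powr (k + \<rho> * (\<eta> + \<alpha>))"

end

theory Submission
  imports Defs
begin

text \<open>For \<open>f = 1\<close> the substitution \<open>s = (\<tau>/x)\<^sup>\<rho>\<close> turns the kernel integral into
  \<open>x\<^bsup>\<rho>(\<eta>+\<alpha>)\<^esup>/\<rho> \<cdot> B(\<eta>+1, \<alpha>)\<close>, so the operator maps \<open>1\<close> to \<open>\<Lambda>\<close>; integrability of the kernel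
  forces \<open>\<eta> > -1\<close>, since the Beta integrand is not integrable at \<open>0\<close> otherwise.
  The operator is monotone, hence \<open>m \<Lambda>\<^sub>1 \<le> A v \<le> M \<Lambda>\<^sub>1\<close> and likewise for the other three
  operator values, and each of the four inequalities is the expansion of a product of two
  nonnegative factors such as \<open>(M \<Lambda>\<^sub>1 - A v) (D u - n \<Lambda>\<^sub>2) \<ge> 0\<close>.\<close>

lemma Beta_integrand_ge_inverse:
  fixes a b t :: real
  assumes a: "a \<le> 0" and t: "0 < t" "t \<le> 1/2"
  shows "min 1 ((1/2) powr (b - 1)) / t \<le> t powr (a - 1) * (1 - t) powr (b - 1)"
proof -
  have "t powr - 1 \<le> t powr (a - 1)"
    using t a by (intro powr_mono') auto
  moreover have "min 1 ((1/2) powr (b - 1)) \<le> (1 - t) powr (b - 1)"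
  proof (cases "b \<ge> 1")
    case True
    then have "(1/2) powr (b - 1) \<le> (1 - t) powr (b - 1)"
      using t by (intro powr_mono2) auto
    then show ?thesis by linarith
  next
    case False
    then have "1 powr (b - 1) \<le> (1 - t) powr (b - 1)"
      using t by (intro powr_mono2') auto
    then show ?thesis by simp
  qed
  ultimately have "min 1 ((1/2) powr (b - 1)) * t powr - 1 \<le> (1 - t) powr (b - 1) * t powr (a - 1)"
    by (intro mult_mono) auto
  then show ?thesis
    using t by (simp add: powr_minus_divide mult_ac)
qed

lemma Beta_integrand_integrable_imp_pos:
  fixes a b :: real
  assumes int: "(\<lambda>t. t powr (a - 1) * (1 - t) powr (b - 1)) integrable_on {0<..<1}"
  shows "a > 0"
proof (rule ccontr)
  assume "\<not> a > 0"
  define f where "f = (\<lambda>t::real. t powr (a - 1) * (1 - t) powr (b - 1))"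
  define d where "d = min 1 ((1/2::real) powr (b - 1))"
  define I where "I = integral {0<..<1} f"
  have d: "d > 0" by (simp add: d_def)
  have f_nonneg: "\<forall>t \<in> {0<..<1}. 0 \<le> f t" by (simp add: f_def)
  have log_bound: "d * (ln (1/2) - ln e) \<le> I" if e: "0 < e" "e < 1/2" for e :: real
  proof -
    have "((\<lambda>t. d / t) has_integral d * ln (1/2) - d * ln e) {e..1/2}"
      using e by (intro fundamental_theorem_of_calculus)
        (auto intro!: derivative_eq_intros simp: has_real_derivative_iff_has_vector_derivative[symmetric])
    moreover have "(f has_integral integral {e..1/2} f) {e..1/2}"
      using e by (intro integrable_integral integrable_on_subinterval[OF int[folded f_def]]) auto
    moreover have "d / t \<le> f t" if "t \<in> {e..1/2}" for t
      using Beta_integrand_ge_inverse[of a t b] that e \<open>\<not> a > 0\<close> by (simp add: d_def f_def)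
    ultimately have "d * (ln (1/2) - ln e) \<le> integral {e..1/2} f"
      unfolding right_diff_distrib by (rule has_integral_le) auto
    also have "\<dots> \<le> I"
      unfolding I_def using e f_nonneg
      by (intro integral_subset_le integrable_on_subinterval[OF int[folded f_def]])
        (auto simp: int[folded f_def])
    finally show ?thesis .
  qed
  \<comment> \<open>\<open>e\<close> is chosen so that the logarithmic lower bound exceeds \<open>I\<close>\<close>
  define e where "e = exp (- (\<bar>I\<bar> / d + 1)) / 2"
  have "\<bar>I\<bar> / d \<ge> 0"
    using d by simp
  then have "0 < e" "e < 1/2"
    by (auto simp: e_def)
  moreover have "d * (ln (1/2) - ln e) = \<bar>I\<bar> + d"
    using d by (simp add: e_def ln_div field_simps)
  ultimately show False
    using log_bound[of e] d by linarith
qed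

lemma katu_integrand_one_substitution:
  fixes x \<rho> \<alpha> \<eta> \<tau> :: real
  assumes x: "x > 0" and \<rho>: "\<rho> > 0" and \<tau>: "0 < \<tau>" "\<tau> < x"
  shows "katu_integrand \<rho> \<alpha> \<eta> (\<lambda>_. 1) x \<tau> =
    x powr (\<rho> * (\<eta> + \<alpha>)) / \<rho> *
    (\<rho> / x * (\<tau> / x) powr (\<rho> - 1) *
     (((\<tau> / x) powr \<rho>) powr (\<eta> + 1 - 1) * (1 - (\<tau> / x) powr \<rho>) powr (\<alpha> - 1)))"
proof -
  define r where "r = x powr \<rho> - \<tau> powr \<rho>"
  have r: "r > 0"
    using \<tau> \<rho> by (simp add: r_def powr_less_mono2)
  have one_minus: "1 - (\<tau> / x) powr \<rho> = r / x powr \<rho>"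
    using x by (simp add: r_def powr_divide field_simps)
  have "x powr (\<rho> * (\<eta> + \<alpha>)) / \<rho> *
    (\<rho> / x * (\<tau> / x) powr (\<rho> - 1) *
     (((\<tau> / x) powr \<rho>) powr (\<eta> + 1 - 1) * (1 - (\<tau> / x) powr \<rho>) powr (\<alpha> - 1)))
    = exp ((\<rho> * (\<eta> + 1) - 1) * ln \<tau> + (\<alpha> - 1) * ln r)"
    unfolding one_minus using \<tau> x r \<rho>
    by (simp add: powr_def ln_div exp_add exp_diff ln_mult)
      (simp add: field_simps flip: exp_add exp_diff, simp add: exp_add exp_diff)
  moreover have "katu_integrand \<rho> \<alpha> \<eta> (\<lambda>_. 1) x \<tau> = exp ((\<rho> * (\<eta> + 1) - 1) * ln \<tau> + (\<alpha> - 1) * ln r)"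
    unfolding katu_integrand_def r_def[symmetric]
    using \<tau> r by (simp add: powr_def exp_add exp_diff field_simps exp_minus)
  ultimately show ?thesis
    by simp
qed

lemma bij_betw_powr_scaling:
  fixes x \<rho> :: real
  assumes x: "x > 0" and \<rho>: "\<rho> > 0"
  shows "bij_betw (\<lambda>\<tau>. (\<tau> / x) powr \<rho>) {0<..<x} {0<..<1}"
proof (rule bij_betw_byWitness[where f' = "\<lambda>s. x * s powr (1 / \<rho>)"])
  have powr_less_1: "s powr e < 1" if "0 \<le> s" "s < 1" "e > 0" for s e :: real
    using powr_less_mono2[of e s 1] that by simp
  show "\<forall>\<tau> \<in> {0<..<x}. x * ((\<tau> / x) powr \<rho>) powr (1 / \<rho>) = \<tau>"
    using x \<rho> by (simp add: powr_powr)
  show "\<forall>s \<in> {0<..<1}. ((x * s powr (1 / \<rho>)) / x) powr \<rho> = s"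
    using x \<rho> by (simp add: powr_powr)
  show "(\<lambda>\<tau>. (\<tau> / x) powr \<rho>) ` {0<..<x} \<subseteq> {0<..<1}"
    using x \<rho> by (auto intro!: powr_less_1)
  show "(\<lambda>s. x * s powr (1 / \<rho>)) ` {0<..<1} \<subseteq> {0<..<x}"
    using x \<rho> by (auto intro!: powr_less_1)
qed

lemma katu_integrand_one_has_integral:
  fixes x \<rho> \<alpha> \<eta> :: real
  assumes x: "x > 0" and \<rho>: "\<rho> > 0" and \<alpha>: "\<alpha> > 0"
    and int: "katu_integrand \<rho> \<alpha> \<eta> (\<lambda>_. 1) x integrable_on {0..x}"
  shows "(katu_integrand \<rho> \<alpha> \<eta> (\<lambda>_. 1) x has_integral
           x powr (\<rho> * (\<eta> + \<alpha>)) / \<rho> * Beta (\<eta> + 1) \<alpha>) {0..x}"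
proof -
  define K where "K = katu_integrand \<rho> \<alpha> \<eta> (\<lambda>_. 1) x"
  define c where "c = x powr (\<rho> * (\<eta> + \<alpha>)) / \<rho>"
  define g where "g = (\<lambda>\<tau>::real. (\<tau> / x) powr \<rho>)"
  define g' where "g' = (\<lambda>\<tau>::real. \<rho> / x * (\<tau> / x) powr (\<rho> - 1))"
  define B where "B = (\<lambda>s::real. s powr (\<eta> + 1 - 1) * (1 - s) powr (\<alpha> - 1))"
  define I where "I = integral {0..x} K"
  let ?S = "{0<..<x}"
  have c: "c > 0"
    using \<rho> x by (simp add: c_def)
  have K_eq: "K \<tau> / c = \<bar>g' \<tau>\<bar> * B (g \<tau>)" if "\<tau> \<in> ?S" for \<tau>
    using katu_integrand_one_substitution[OF x \<rho>, of \<tau> \<alpha> \<eta>] that c \<rho> x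
    by (simp add: K_def c_def g_def g'_def B_def)
  have "(K has_integral I) ?S"
    using integrable_integral[OF int] by (simp add: K_def I_def flip: has_integral_Icc_iff_Ioo)
  then have "((\<lambda>\<tau>. K \<tau> / c) has_integral I / c) ?S"
    by (rule has_integral_divide)
  then have "((\<lambda>\<tau>. \<bar>g' \<tau>\<bar> * B (g \<tau>)) has_integral I / c) ?S"
    by (rule has_integral_eq[rotated]) (rule K_eq)
  moreover have "\<bar>g' \<tau>\<bar> * B (g \<tau>) \<ge> 0" for \<tau>
    by (simp add: B_def)
  ultimately have "(\<lambda>\<tau>. \<bar>g' \<tau>\<bar> * B (g \<tau>)) absolutely_integrable_on ?S \<and>
      integral ?S (\<lambda>\<tau>. \<bar>g' \<tau>\<bar> * B (g \<tau>)) = I / c"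
    by (auto intro: nonnegative_absolutely_integrable_1 dest: integral_unique)
  moreover have "(g has_field_derivative g' \<tau>) (at \<tau> within ?S)" if "\<tau> \<in> ?S" for \<tau>
    using that x \<rho> unfolding g_def g'_def
    by (auto intro!: derivative_eq_intros simp: powr_diff field_simps)
  moreover have "inj_on g ?S" and "g ` ?S = {0<..<1}"
    using bij_betw_powr_scaling[OF x \<rho>] unfolding g_def bij_betw_def by auto
  ultimately have B_int: "B absolutely_integrable_on {0<..<1} \<and> integral {0<..<1} B = I / c"
    using has_absolute_integral_change_of_variables_1'[of ?S g g' B "I / c"] by auto
  then have "B integrable_on {0<..<1}"
    using set_lebesgue_integral_eq_integral(1) by blast
  then have "\<eta> > -1"
    using Beta_integrand_integrable_imp_pos[of "\<eta> + 1" \<alpha>] by (simp add: B_def)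
  then have "(B has_integral Beta (\<eta> + 1) \<alpha>) {0<..<1}"
    using has_integral_Beta_real[of "\<eta> + 1" \<alpha>] \<alpha>
    by (simp add: B_def flip: has_integral_Icc_iff_Ioo)
  then have "I = c * Beta (\<eta> + 1) \<alpha>"
    using B_int c by (auto dest: integral_unique simp: field_simps)
  then show ?thesis
    using int by (simp add: I_def K_def c_def has_integral_integrable_integral)
qed

lemma katu_cmult:
  "katu \<rho> \<alpha> \<beta> \<eta> k (\<lambda>t. c * f t) x = c * katu \<rho> \<alpha> \<beta> \<eta> k f x"
proof -
  have "katu_integrand \<rho> \<alpha> \<eta> (\<lambda>t. c * f t) x = (\<lambda>\<tau>. c *\<^sub>R katu_integrand \<rho> \<alpha> \<eta> f x \<tau>)"
    by (simp add: katu_integrand_def fun_eq_iff)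
  then show ?thesis
    by (simp add: katu_def)
qed

lemma katu_exists_cmult:
  assumes "katu_exists \<rho> \<alpha> \<eta> f x"
  shows "katu_exists \<rho> \<alpha> \<eta> (\<lambda>t. c * f t) x"
proof -
  have "katu_integrand \<rho> \<alpha> \<eta> (\<lambda>t. c * f t) x = (\<lambda>\<tau>. c *\<^sub>R katu_integrand \<rho> \<alpha> \<eta> f x \<tau>)"
    by (simp add: katu_integrand_def fun_eq_iff)
  then show ?thesis
    using integrable_on_cmult_left[OF assms[unfolded katu_exists_def], of c]
    by (simp add: katu_exists_def)
qed

lemma katu_mono:
  assumes \<alpha>: "\<alpha> > 0" and f: "katu_exists \<rho> \<alpha> \<eta> f x" and g: "katu_exists \<rho> \<alpha> \<eta> g x"
    and le: "\<And>t. 0 \<le> t \<Longrightarrow> t \<le> x \<Longrightarrow> f t \<le> g t"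
  shows "katu \<rho> \<alpha> \<beta> \<eta> k f x \<le> katu \<rho> \<alpha> \<beta> \<eta> k g x"
proof -
  have "integral {0..x} (katu_integrand \<rho> \<alpha> \<eta> f x) \<le> integral {0..x} (katu_integrand \<rho> \<alpha> \<eta> g x)"
    using f g le unfolding katu_exists_def katu_integrand_def
    by (intro integral_le) (auto intro!: divide_right_mono mult_left_mono)
  moreover have "\<rho> powr (1 - \<beta>) * x powr k / Gamma \<alpha> \<ge> 0"
    using Gamma_real_pos[OF \<alpha>] by simp
  ultimately show ?thesis
    unfolding katu_def by (rule mult_left_mono)
qed

lemma katu_one:
  assumes x: "x > 0" and \<rho>: "\<rho> > 0" and \<alpha>: "\<alpha> > 0"
    and ex: "katu_exists \<rho> \<alpha> \<eta> (\<lambda>_. 1) x"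
  shows "katu \<rho> \<alpha> \<beta> \<eta> k (\<lambda>_. 1) x = katu_Lambda \<rho> \<beta> x k \<alpha> \<eta>"
proof -
  have "integral {0..x} (katu_integrand \<rho> \<alpha> \<eta> (\<lambda>_. 1) x) =
      x powr (\<rho> * (\<eta> + \<alpha>)) / \<rho> * Beta (\<eta> + 1) \<alpha>"
    using katu_integrand_one_has_integral[OF x \<rho> \<alpha>] ex
    by (simp add: katu_exists_def integral_unique)
  moreover have "\<rho> powr (1 - \<beta>) = \<rho> * \<rho> powr (- \<beta>)"
    using \<rho> powr_add[of \<rho> 1 "- \<beta>"] by simp
  moreover have "x powr (k + \<rho> * (\<eta> + \<alpha>)) = x powr k * x powr (\<rho> * (\<eta> + \<alpha>))"
    by (simp add: powr_add)
  ultimately show ?thesis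
    using Gamma_real_pos[OF \<alpha>] \<rho>
    by (simp add: katu_def katu_Lambda_def Beta_def field_simps add_ac)
qed

lemma katu_bounds:
  assumes x: "x > 0" and \<rho>: "\<rho> > 0" and \<alpha>: "\<alpha> > 0"
    and ex_one: "katu_exists \<rho> \<alpha> \<eta> (\<lambda>_. 1) x" and ex_f: "katu_exists \<rho> \<alpha> \<eta> f x"
    and bounds: "\<And>t. 0 \<le> t \<Longrightarrow> t \<le> x \<Longrightarrow> lo \<le> f t \<and> f t \<le> hi"
  shows "lo * katu_Lambda \<rho> \<beta> x k \<alpha> \<eta> \<le> katu \<rho> \<alpha> \<beta> \<eta> k f x"
    and "katu \<rho> \<alpha> \<beta> \<eta> k f x \<le> hi * katu_Lambda \<rho> \<beta> x k \<alpha> \<eta>"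
proof -
  have const: "katu \<rho> \<alpha> \<beta> \<eta> k (\<lambda>_. c) x = c * katu_Lambda \<rho> \<beta> x k \<alpha> \<eta>"
    and ex_const: "katu_exists \<rho> \<alpha> \<eta> (\<lambda>_. c) x" for c
    using katu_cmult[of \<rho> \<alpha> \<beta> \<eta> k c "\<lambda>_. 1" x] katu_exists_cmult[OF ex_one, of c]
      katu_one[OF x \<rho> \<alpha> ex_one]
    by simp_all
  have "katu \<rho> \<alpha> \<beta> \<eta> k (\<lambda>_. lo) x \<le> katu \<rho> \<alpha> \<beta> \<eta> k f x"
    by (rule katu_mono[OF \<alpha> ex_const ex_f]) (use bounds in auto)
  then show "lo * katu_Lambda \<rho> \<beta> x k \<alpha> \<eta> \<le> katu \<rho> \<alpha> \<beta> \<eta> k f x"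
    by (simp add: const)
  have "katu \<rho> \<alpha> \<beta> \<eta> k f x \<le> katu \<rho> \<alpha> \<beta> \<eta> k (\<lambda>_. hi) x"
    by (rule katu_mono[OF \<alpha> ex_f ex_const]) (use bounds in auto)
  then show "katu \<rho> \<alpha> \<beta> \<eta> k f x \<le> hi * katu_Lambda \<rho> \<beta> x k \<alpha> \<eta>"
    by (simp add: const)
qed

theorem corollary2:
  fixes v u :: "real \<Rightarrow> real"
    and m M n N x \<alpha> \<delta> \<rho> \<beta> lam \<eta> k :: real
  assumes v_int: "v integrable_on {0..}" and u_int: "u integrable_on {0..}"
    and v_bd: "\<And>t. t \<ge> 0 \<Longrightarrow> m \<le> v t \<and> v t \<le> M"
    and u_bd: "\<And>t. t \<ge> 0 \<Longrightarrow> n \<le> u t \<and> u t \<le> N"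
    and x: "x > 0" and \<alpha>: "\<alpha> > 0" and \<delta>: "\<delta> > 0" and \<rho>: "\<rho> > 0"
    and ex_A: "\<forall>f \<in> {v, u, (\<lambda>_. 1)}. katu_exists \<rho> \<alpha> \<eta> f x"
    and ex_D: "\<forall>f \<in> {v, u, (\<lambda>_. 1)}. katu_exists \<rho> \<delta> \<eta> f x"
  defines "A \<equiv> \<lambda>f. katu \<rho> \<alpha> \<beta> \<eta> k f x"
    and "D \<equiv> \<lambda>f. katu \<rho> \<delta> lam \<eta> k f x"
    and "\<Lambda>1 \<equiv> katu_Lambda \<rho> \<beta> x k \<alpha> \<eta>"
    and "\<Lambda>2 \<equiv> katu_Lambda \<rho> lam x k \<delta> \<eta>"
  shows "(M * \<Lambda>1 * D u + n * \<Lambda>2 * A v \<ge> n * M * \<Lambda>2 * \<Lambda>1 + D u * A v) \<and>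
    (m * \<Lambda>2 * A u + N * \<Lambda>1 * D v \<ge> m * N * \<Lambda>2 * \<Lambda>1 + D v * A u) \<and>
    (M * N * \<Lambda>1 * \<Lambda>2 + A v * D u \<ge> M * \<Lambda>1 * D u + N * \<Lambda>2 * A v) \<and>
    (m * n * \<Lambda>1 * \<Lambda>2 + A v * D u \<ge> m * \<Lambda>1 * D u + n * \<Lambda>2 * A v)"
proof -
  have Av: "m * \<Lambda>1 \<le> A v" "A v \<le> M * \<Lambda>1"
    unfolding A_def \<Lambda>1_def using ex_A v_bd by (auto intro: katu_bounds[OF x \<rho> \<alpha>])
  have Au: "n * \<Lambda>1 \<le> A u" "A u \<le> N * \<Lambda>1"
    unfolding A_def \<Lambda>1_def using ex_A u_bd by (auto intro: katu_bounds[OF x \<rho> \<alpha>])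
  have Dv: "m * \<Lambda>2 \<le> D v" "D v \<le> M * \<Lambda>2"
    unfolding D_def \<Lambda>2_def using ex_D v_bd by (auto intro: katu_bounds[OF x \<rho> \<delta>])
  have Du: "n * \<Lambda>2 \<le> D u" "D u \<le> N * \<Lambda>2"
    unfolding D_def \<Lambda>2_def using ex_D u_bd by (auto intro: katu_bounds[OF x \<rho> \<delta>])
  have "(M * \<Lambda>1 - A v) * (D u - n * \<Lambda>2) \<ge> 0"
    and "(N * \<Lambda>1 - A u) * (D v - m * \<Lambda>2) \<ge> 0"
    and "(M * \<Lambda>1 - A v) * (N * \<Lambda>2 - D u) \<ge> 0"
    and "(A v - m * \<Lambda>1) * (D u - n * \<Lambda>2) \<ge> 0"
    using Av Au Dv Du by simp_all
  then show ?thesis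
    by (simp add: algebra_simps)
qed

end
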